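(* Let $d\ge2$ be fixed, $c_0$ a constant sufficiently large in terms of $d$ (e.g. $c_0=100d$), $R^2=2\log n+\log((\log n)^{c_0})$, and $\Psi'$ the standard normal distribution on $\mathbb{R}^d$ conditioned on the ball $B(R)$ of radius $R$ about the origin. For a positive integer $k$ let $K'_k$ denote the convex hull of $k$ independent $\Psi'$-distributed points (with $R=R(n)$ fixed by $n$). Let $A\ge10$ be a constant. Then there is a function $\delta(n)\to0$ such that for all sufficiently large $n$ and every integer $n'$ with $n\le n'\le n+A\sqrt{n\log n}$, $$|\mathbb{E}\,\mathrm{Vol}(K'_{n'})-\mathbb{E}\,\mathrm{Vol}(K'_n)|\le n^{-1/2+\delta(n)},\qquad |\mathrm{Var}\,\mathrm{Vol}(K'_{n'})-\mathrm{Var}\,\mathrm{Vol}(K'_n)|\le n^{-1/2+\delta(n)},$$ and for all real $t$, $|\mathbb{P}(\mathrm{Vol}(K'_{n'})\le t)-\mathbb{P}(\mathrm{Vol}(K'_n)\le t)|\le n^{-1/2+\delta(n)}$.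
   Context: The paper writes $n^{-1/2+o(1)}$ for $n^{-1/2+\delta(n)}$ with $\delta(n)\to0$. *)

theory Defs
  imports "HOL-Probability.Probability"
begin

definition std_gauss_dens :: "'a::euclidean_space \<Rightarrow> real" where
  "std_gauss_dens x = (2 * pi) powr (- real DIM('a) / 2) * exp (- (norm x)\<^sup>2 / 2)"

definition std_gauss :: "'a::euclidean_space measure" where
  "std_gauss = density lborel (\<lambda>x. ennreal (std_gauss_dens x))"

definition radius :: "real \<Rightarrow> nat \<Rightarrow> real" where
  "radius c0 n = sqrt (2 * ln (real n) + ln ((ln (real n)) powr c0))"

definition Psi' :: "real \<Rightarrow> nat \<Rightarrow> 'a::euclidean_space measure" where
  "Psi' c0 n = uniform_measure std_gauss (cball 0 (radius c0 n))"

definition sample :: "real \<Rightarrow> nat \<Rightarrow> nat \<Rightarrow> (nat \<Rightarrow> 'a::euclidean_space) measure" where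
  "sample c0 n k = PiM {..<k} (\<lambda>_. Psi' c0 n)"

definition hull_vol :: "nat \<Rightarrow> (nat \<Rightarrow> 'a::euclidean_space) \<Rightarrow> real" where
  "hull_vol k \<omega> = measure lborel (convex hull (\<omega> ` {..<k}))"

definition vol_mean :: "'a::euclidean_space itself \<Rightarrow> real \<Rightarrow> nat \<Rightarrow> nat \<Rightarrow> real" where
  "vol_mean _ c0 n k = integral\<^sup>L (sample c0 n k :: (nat \<Rightarrow> 'a) measure) (hull_vol k)"

definition vol_var :: "'a::euclidean_space itself \<Rightarrow> real \<Rightarrow> nat \<Rightarrow> nat \<Rightarrow> real" where
  "vol_var T c0 n k = integral\<^sup>L (sample c0 n k :: (nat \<Rightarrow> 'a) measure)
      (\<lambda>\<omega>. (hull_vol k \<omega> - vol_mean T c0 n k)\<^sup>2)"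

definition vol_cdf :: "'a::euclidean_space itself \<Rightarrow> real \<Rightarrow> nat \<Rightarrow> nat \<Rightarrow> real \<Rightarrow> real" where
  "vol_cdf _ c0 n k t = measure (sample c0 n k :: (nat \<Rightarrow> 'a) measure)
      {\<omega> \<in> space (sample c0 n k :: (nat \<Rightarrow> 'a) measure). hull_vol k \<omega> \<le> t}"

end

theory Submission
  imports Defs "HOL-Real_Asymp.Real_Asymp"
begin

text \<open>Let s = sqrt (2 log n), so that s \<le> R \<le> s^2 for large n, and let d be the dimension.
  Sampling n' points and keeping the first n of them couples K'_n with K'_n'. Every unit vector
  lies within 1/s^2 of one of polynomially many (in s) net directions u, and a single point falls
  into the half-space \<langle>x, u\<rangle> \<ge> s - 3 with probability at least e^(-(s-1)^2/2) / R^d; so with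
  overwhelming probability the first n points meet all these half-spaces and their hull contains
  the ball of radius s - 4. Each of the n' - n \<le> A sqrt (n log n) extra points leaves that ball
  with probability at most e^(1/2) R^d e^(-(s-4)^2/2) = n^(-1) e^(O(s)), so the two hull volumes
  differ with probability n^(-1/2 + O(s / log n)). As every hull volume is at most vol B(R), this
  bounds the differences of the means, the variances and the distribution functions.\<close>

section \<open>Measurability of the hull volume\<close>

lemma convex_hull_mem_iff_dense_support:
  fixes S :: "'a::euclidean_space set"
  assumes S: "finite S" "S \<noteq> {}" and D: "\<And>X. open X \<Longrightarrow> X \<noteq> {} \<Longrightarrow> \<exists>d\<in>D. d \<in> X"
  shows "x \<in> convex hull S \<longleftrightarrow> (\<forall>u\<in>D. \<exists>y\<in>S. inner x u \<le> inner y u)"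
proof
  assume x: "x \<in> convex hull S"
  show "\<forall>u\<in>D. \<exists>y\<in>S. inner x u \<le> inner y u"
  proof
    fix u
    define m where "m = Max ((\<lambda>y. inner y u) ` S)"
    have "inner y u \<le> m" if "y \<in> S" for y
      unfolding m_def using S that by (intro Max_ge) auto
    then have "convex hull S \<subseteq> {y. inner u y \<le> m}"
      by (intro hull_minimal convex_halfspace_le) (auto simp: inner_commute)
    with x have "inner x u \<le> m" by (auto simp: inner_commute)
    moreover have "m \<in> (\<lambda>y. inner y u) ` S"
      unfolding m_def using S by (intro Max_in) auto
    ultimately show "\<exists>y\<in>S. inner x u \<le> inner y u" by auto
  qed
next
  assume H: "\<forall>u\<in>D. \<exists>y\<in>S. inner x u \<le> inner y u"
  show "x \<in> convex hull S"
  proof (rule ccontr)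
    assume "x \<notin> convex hull S"
    moreover have "closed (convex hull S)"
      using S by (simp add: compact_imp_closed finite_imp_compact_convex_hull)
    ultimately obtain a b where ab: "inner a x < b" "\<forall>y\<in>convex hull S. b < inner a y"
      using separating_hyperplane_closed_point[OF convex_convex_hull] by blast
    define X where "X = (\<Inter>y\<in>S. {u. inner (y - x) u < 0})"
    have "open X"
      unfolding X_def using S by (intro open_INT) (auto intro: open_halfspace_lt)
    moreover have "inner (y - x) (-a) < 0" if "y \<in> S" for y
      using ab(1) ab(2)[rule_format, OF hull_inc[OF that]] by (simp add: inner_diff_left inner_diff_right inner_commute)
    then have "-a \<in> X" by (simp add: X_def)
    ultimately obtain u where "u \<in> D" "u \<in> X" using D by blast
    with H show False by (force simp: X_def inner_diff_left)
  qed
qed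

text \<open>The hull is the section of a measurable set in the product with the ambient space,
  expressed through countably many support directions.\<close>
lemma measurable_hull_vol_borel:
  "hull_vol k \<in> borel_measurable (PiM {..<k} (\<lambda>_. borel :: 'a::euclidean_space measure))"
proof (cases "k = 0")
  case True
  then show ?thesis by (simp add: hull_vol_def[abs_def])
next
  case False
  let ?N = "PiM {..<k} (\<lambda>_. borel :: 'a measure)"
  obtain D :: "'a set" where "countable D" and D: "\<And>X. open X \<Longrightarrow> X \<noteq> {} \<Longrightarrow> \<exists>d\<in>D. d \<in> X"
    by (rule countable_dense_setE) blast
  moreover have "D \<noteq> {}" using D[of UNIV] by auto
  moreover define e where "e = from_nat_into D"
  ultimately have De: "D = range e" by (simp add: range_from_nat_into)
  define Q where "Q = {p \<in> space (?N \<Otimes>\<^sub>M lborel). \<forall>j. \<exists>i\<in>{..<k}. inner (snd p) (e j) \<le> inner (fst p i) (e j)}"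
  have [measurable]: "(\<lambda>p. inner (fst p i) u) \<in> borel_measurable (?N \<Otimes>\<^sub>M lborel)" if "i \<in> {..<k}" for i u
  proof -
    have "(\<lambda>p. fst p i) \<in> measurable (?N \<Otimes>\<^sub>M lborel) borel"
      using that by (intro measurable_compose[OF measurable_fst measurable_component_singleton]) simp
    then show ?thesis by measurable
  qed
  have Q: "Q \<in> sets (?N \<Otimes>\<^sub>M lborel)"
    unfolding Q_def by measurable
  have hull_section: "Pair \<omega> -` Q = convex hull (\<omega> ` {..<k})" if "\<omega> \<in> space ?N" for \<omega>
    using that convex_hull_mem_iff_dense_support[OF _ _ D, of "\<omega> ` {..<k}"] False
    by (auto simp: Q_def space_pair_measure De)
  have "(\<lambda>\<omega>. emeasure lborel (Pair \<omega> -` Q)) \<in> borel_measurable ?N"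
    by (rule sigma_finite_measure.measurable_emeasure_Pair[OF sigma_finite_lborel Q])
  then have "(\<lambda>\<omega>. enn2real (emeasure lborel (Pair \<omega> -` Q))) \<in> borel_measurable ?N"
    by measurable
  then show ?thesis
    by (rule measurable_cong[THEN iffD1, rotated]) (simp add: hull_section hull_vol_def measure_def)
qed

lemma measurable_hull_vol:
  assumes "sets P = sets (borel :: 'a::euclidean_space measure)"
  shows "hull_vol k \<in> borel_measurable (PiM {..<k} (\<lambda>_. P))"
proof -
  have "sets (PiM {..<k} (\<lambda>_. P)) = sets (PiM {..<k} (\<lambda>_. borel :: 'a measure))"
    using assms by (intro sets_PiM_cong) auto
  then show ?thesis
    using measurable_hull_vol_borel by (subst measurable_cong_sets[OF _ refl]) auto
qed

section \<open>The standard Gaussian conditioned on a ball\<close>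

lemma std_gauss_dens_eq:
  "std_gauss_dens (x::'a::euclidean_space) = std_gauss_dens (0::'a) * exp (- ((norm x)\<^sup>2 / 2))"
  by (simp add: std_gauss_dens_def)

lemma std_gauss_dens_0_pos: "0 < std_gauss_dens (0::'a::euclidean_space)"
  by (simp add: std_gauss_dens_def)

lemma std_gauss_dens_le_0: "std_gauss_dens (x::'a::euclidean_space) \<le> std_gauss_dens (0::'a)"
proof -
  have "std_gauss_dens x = std_gauss_dens (0::'a) * exp (- ((norm x)\<^sup>2 / 2))"
    by (rule std_gauss_dens_eq)
  also have "\<dots> \<le> std_gauss_dens (0::'a)"
    using std_gauss_dens_0_pos[where 'a='a] by (intro mult_left_le) auto
  finally show ?thesis .
qed

lemma std_gauss_dens_nonneg: "0 \<le> std_gauss_dens x"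
  by (simp add: std_gauss_dens_def)

lemma std_gauss_dens_ge:
  "norm x \<le> m \<Longrightarrow> std_gauss_dens (0::'a) * exp (- (m\<^sup>2 / 2)) \<le> std_gauss_dens (x::'a::euclidean_space)"
  by (subst (2) std_gauss_dens_eq) (simp add: std_gauss_dens_0_pos power_mono)

lemma std_gauss_dens_le:
  "0 \<le> r \<Longrightarrow> r \<le> norm x \<Longrightarrow> std_gauss_dens (x::'a::euclidean_space) \<le> std_gauss_dens (0::'a) * exp (- (r\<^sup>2 / 2))"
  by (subst std_gauss_dens_eq) (simp add: std_gauss_dens_0_pos power_mono)

lemma sets_std_gauss [simp, measurable_cong]: "sets (std_gauss :: 'a::euclidean_space measure) = sets borel"
  by (simp add: std_gauss_def)

lemma emeasure_std_gauss_le: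
  fixes S :: "'a::euclidean_space set"
  assumes S: "S \<in> sets borel" and hi: "\<And>x. x \<in> S \<Longrightarrow> std_gauss_dens x \<le> hi"
  shows "emeasure std_gauss S \<le> ennreal hi * emeasure lborel S"
proof -
  have "emeasure std_gauss S = (\<integral>\<^sup>+x\<in>S. ennreal (std_gauss_dens x) \<partial>lborel)"
    using S unfolding std_gauss_def std_gauss_dens_def by (subst emeasure_density) auto
  also have "\<dots> \<le> (\<integral>\<^sup>+x\<in>S. ennreal hi \<partial>lborel)"
    by (intro nn_integral_mono) (auto simp: indicator_def hi ennreal_leI)
  finally show ?thesis
    using S by (simp add: nn_integral_cmult_indicator)
qed

lemma emeasure_std_gauss_ge:
  fixes S :: "'a::euclidean_space set"
  assumes S: "S \<in> sets borel" and lo: "\<And>x. x \<in> S \<Longrightarrow> lo \<le> std_gauss_dens x"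
  shows "ennreal lo * emeasure lborel S \<le> emeasure std_gauss S"
proof -
  have "ennreal lo * emeasure lborel S = (\<integral>\<^sup>+x\<in>S. ennreal lo \<partial>lborel)"
    using S by (simp add: nn_integral_cmult_indicator)
  also have "\<dots> \<le> (\<integral>\<^sup>+x\<in>S. ennreal (std_gauss_dens x) \<partial>lborel)"
    by (intro nn_integral_mono) (auto simp: indicator_def lo ennreal_leI)
  also have "\<dots> = emeasure std_gauss S"
    using S unfolding std_gauss_def std_gauss_dens_def by (subst emeasure_density) auto
  finally show ?thesis .
qed

lemma fmeasurable_std_gauss:
  fixes S :: "'a::euclidean_space set"
  assumes "S \<in> sets borel" "bounded S"
  shows "S \<in> fmeasurable std_gauss"
proof -
  have "emeasure std_gauss S \<le> ennreal (std_gauss_dens (0::'a)) * emeasure lborel S"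
    using assms(1) std_gauss_dens_le_0 by (rule emeasure_std_gauss_le)
  also have "\<dots> < \<infinity>"
    using emeasure_bounded_finite[OF assms(2)] by (simp add: ennreal_mult_less_top)
  finally show ?thesis
    using assms(1) by (simp add: fmeasurable_def)
qed

lemma measure_std_gauss_le:
  fixes S :: "'a::euclidean_space set"
  assumes S: "S \<in> sets borel" "bounded S" and hi: "\<And>x. x \<in> S \<Longrightarrow> std_gauss_dens x \<le> hi"
  shows "measure std_gauss S \<le> hi * measure lborel S"
proof (cases "S = {}")
  case False
  then have "0 \<le> hi"
    using hi std_gauss_dens_nonneg by (meson all_not_in_conv order.trans)
  moreover have "emeasure std_gauss S \<le> ennreal hi * emeasure lborel S"
    using S(1) hi by (rule emeasure_std_gauss_le)
  ultimately have "emeasure std_gauss S \<le> ennreal (hi * measure lborel S)"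
    using emeasure_bounded_finite[OF S(2)] by (simp add: emeasure_eq_ennreal_measure ennreal_mult)
  then show ?thesis
    using fmeasurable_std_gauss[OF S] \<open>0 \<le> hi\<close> by (simp add: emeasure_eq_measure2 ennreal_le_iff)
qed simp

lemma measure_std_gauss_ge:
  fixes S :: "'a::euclidean_space set"
  assumes S: "S \<in> sets borel" "bounded S" and lo: "0 \<le> lo" "\<And>x. x \<in> S \<Longrightarrow> lo \<le> std_gauss_dens x"
  shows "lo * measure lborel S \<le> measure std_gauss S"
proof -
  have "ennreal (lo * measure lborel S) \<le> emeasure std_gauss S"
    using emeasure_std_gauss_ge[OF S(1) lo(2)] emeasure_bounded_finite[OF S(2)] lo(1)
    by (simp add: emeasure_eq_ennreal_measure ennreal_mult)
  then show ?thesis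
    using fmeasurable_std_gauss[OF S] by (simp add: emeasure_eq_measure2 ennreal_le_iff)
qed

lemma measure_std_gauss_cball_le:
  "0 \<le> R \<Longrightarrow> measure std_gauss (cball (0::'a::euclidean_space) R)
    \<le> std_gauss_dens (0::'a) * unit_ball_vol (real DIM('a)) * R ^ DIM('a)"
proof -
  assume "0 \<le> R"
  have "measure std_gauss (cball (0::'a) R) \<le> std_gauss_dens (0::'a) * measure lborel (cball (0::'a) R)"
    by (intro measure_std_gauss_le std_gauss_dens_le_0) auto
  with \<open>0 \<le> R\<close> show ?thesis
    by (simp add: content_cball mult.assoc)
qed

lemma measure_std_gauss_cball_ge:
  assumes "1 \<le> R"
  shows "std_gauss_dens (0::'a::euclidean_space) * exp (- (1 / 2)) * unit_ball_vol (real DIM('a))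
    \<le> measure std_gauss (cball (0::'a) R)"
proof -
  have "std_gauss_dens (0::'a) * exp (- (1 / 2)) * unit_ball_vol (real DIM('a))
      = std_gauss_dens (0::'a) * exp (- (1 / 2)) * measure lborel (cball (0::'a) 1)"
    by (simp add: content_cball)
  also have "\<dots> \<le> measure std_gauss (cball (0::'a) 1)"
    using std_gauss_dens_0_pos[where 'a='a]
    by (intro measure_std_gauss_ge) (auto intro: std_gauss_dens_ge[where m=1, simplified])
  also have "\<dots> \<le> measure std_gauss (cball (0::'a) R)"
    using assms by (intro measure_mono_fmeasurable fmeasurable_std_gauss) auto
  finally show ?thesis .
qed

lemma measure_std_gauss_cball_pos: "1 \<le> R \<Longrightarrow> 0 < measure std_gauss (cball (0::'a::euclidean_space) R)"
  using std_gauss_dens_0_pos[where 'a='a]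
  by (intro less_le_trans[OF _ measure_std_gauss_cball_ge]) auto

lemma prob_space_gauss_cball:
  "1 \<le> R \<Longrightarrow> prob_space (uniform_measure std_gauss (cball (0::'a::euclidean_space) R))"
  using measure_std_gauss_cball_pos[of R, where 'a='a] fmeasurable_std_gauss[of "cball (0::'a) R"]
  by (intro prob_space_uniform_measure) (auto simp: emeasure_eq_measure2)

lemma measure_gauss_cball:
  assumes "1 \<le> R" and S: "S \<in> sets borel"
  shows "measure (uniform_measure std_gauss (cball (0::'a::euclidean_space) R)) S
    = measure std_gauss (cball 0 R \<inter> S) / measure std_gauss (cball (0::'a) R)"
proof -
  have "emeasure std_gauss (cball (0::'a) R) = ennreal (measure std_gauss (cball (0::'a) R))"
    by (intro emeasure_eq_measure2 fmeasurable_std_gauss) auto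
  with measure_std_gauss_cball_pos[OF assms(1), where 'a='a]
  have "emeasure std_gauss (cball (0::'a) R) \<noteq> 0" "emeasure std_gauss (cball (0::'a) R) \<noteq> \<infinity>"
    by auto
  then show ?thesis
    using S by (intro measure_uniform_measure) auto
qed

lemma ball_subset_cball_inter_halfspace:
  fixes u :: "'a::real_inner"
  assumes u: "norm u = 1" and t: "0 \<le> t"
  shows "ball ((t + 1) *\<^sub>R u) 1 \<subseteq> cball 0 (t + 2) \<inter> {x. t \<le> inner x u}"
proof
  fix x assume "x \<in> ball ((t + 1) *\<^sub>R u) 1"
  then have d: "norm (x - (t + 1) *\<^sub>R u) < 1"
    by (simp add: dist_norm norm_minus_commute)
  have "inner u u = 1"
    using power2_norm_eq_inner[of u] u by simp
  then have "inner (x - (t + 1) *\<^sub>R u) u = inner x u - (t + 1)"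
    by (simp add: inner_diff_left)
  moreover have "- norm (x - (t + 1) *\<^sub>R u) \<le> inner (x - (t + 1) *\<^sub>R u) u"
    using Cauchy_Schwarz_ineq2[of "x - (t + 1) *\<^sub>R u" u] u by (simp add: abs_le_iff)
  ultimately have "t \<le> inner x u"
    using d by linarith
  have c: "norm ((t + 1) *\<^sub>R u) = t + 1"
    using u t by simp
  moreover have "norm x \<le> t + 2"
    using norm_triangle_ineq[of "(t + 1) *\<^sub>R u" "x - (t + 1) *\<^sub>R u"] c d by simp
  ultimately show "x \<in> cball 0 (t + 2) \<inter> {x. t \<le> inner x u}"
    using \<open>t \<le> inner x u\<close> by simp
qed

lemma measure_gauss_cball_halfspace_ge:
  fixes u :: "'a::euclidean_space"
  assumes u: "norm u = 1" and t: "0 \<le> t" "t + 2 \<le> R"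
  shows "exp (- ((t + 2)\<^sup>2 / 2)) / R ^ DIM('a)
    \<le> measure (uniform_measure std_gauss (cball 0 R)) {x. t \<le> inner x u}"
proof -
  let ?H = "{x. t \<le> inner x u}" and ?V = "unit_ball_vol (real DIM('a))" and ?g = "std_gauss_dens (0::'a)"
  have R: "1 \<le> R" using t by linarith
  have V: "0 < ?V" by simp
  then have V': "?V \<noteq> 0" by linarith
  define c where "c = (t + 1) *\<^sub>R u"
  have ball: "ball c 1 \<subseteq> cball 0 (t + 2) \<inter> ?H"
    unfolding c_def using u t(1) by (rule ball_subset_cball_inter_halfspace)
  then have norm_le: "norm x \<le> t + 2" if "x \<in> ball c 1" for x
    using that by auto
  have sub: "ball c 1 \<subseteq> cball 0 R \<inter> ?H"
    using ball t by auto
  have "?g * exp (- ((t + 2)\<^sup>2 / 2)) * ?V = ?g * exp (- ((t + 2)\<^sup>2 / 2)) * measure lborel (ball c 1)"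
    by (simp add: content_ball)
  also have "\<dots> \<le> measure std_gauss (ball c 1)"
    using std_gauss_dens_0_pos[where 'a='a] norm_le
    by (intro measure_std_gauss_ge std_gauss_dens_ge) auto
  also have "\<dots> \<le> measure std_gauss (cball 0 R \<inter> ?H)"
    using sub by (intro measure_mono_fmeasurable fmeasurable_std_gauss) auto
  finally have num: "?g * exp (- ((t + 2)\<^sup>2 / 2)) * ?V \<le> measure std_gauss (cball 0 R \<inter> ?H)" .
  have den: "measure std_gauss (cball (0::'a) R) \<le> ?g * ?V * R ^ DIM('a)"
    using R by (intro measure_std_gauss_cball_le) simp
  have "exp (- ((t + 2)\<^sup>2 / 2)) / R ^ DIM('a) = (?g * exp (- ((t + 2)\<^sup>2 / 2)) * ?V) / (?g * ?V * R ^ DIM('a))"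
    using std_gauss_dens_0_pos[where 'a='a] V V' R by (simp add: field_simps)
  also have "\<dots> \<le> measure std_gauss (cball 0 R \<inter> ?H) / measure std_gauss (cball (0::'a) R)"
    using num den measure_std_gauss_cball_pos[OF R] std_gauss_dens_0_pos[where 'a='a] R V
    by (intro frac_le) auto
  also have "\<dots> = measure (uniform_measure std_gauss (cball 0 R)) ?H"
  proof -
    have "?H \<in> sets borel" by measurable
    then show ?thesis by (rule measure_gauss_cball[OF R, symmetric])
  qed
  finally show ?thesis .
qed

lemma measure_gauss_cball_norm_gt_le:
  assumes R: "1 \<le> R" and r: "0 \<le> r"
  shows "measure (uniform_measure std_gauss (cball (0::'a::euclidean_space) R)) {x. r < norm x}
    \<le> exp (1 / 2) * R ^ DIM('a) * exp (- (r\<^sup>2 / 2))"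
proof -
  let ?T = "cball 0 R \<inter> {x::'a. r < norm x}" and ?V = "unit_ball_vol (real DIM('a))" and ?g = "std_gauss_dens (0::'a)"
  have V: "0 < ?V" by simp
  then have V': "?V \<noteq> 0" by linarith
  have "measure std_gauss ?T \<le> ?g * exp (- (r\<^sup>2 / 2)) * measure lborel ?T"
    using r by (intro measure_std_gauss_le std_gauss_dens_le) auto
  also have "\<dots> \<le> ?g * exp (- (r\<^sup>2 / 2)) * measure lborel (cball (0::'a) R)"
    using std_gauss_dens_0_pos[where 'a='a] emeasure_bounded_finite[OF bounded_cball, of "0::'a" R]
    by (intro mult_left_mono measure_mono_fmeasurable) (auto simp: fmeasurable_def)
  finally have num: "measure std_gauss ?T \<le> ?g * exp (- (r\<^sup>2 / 2)) * ?V * R ^ DIM('a)"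
    using R V V' by (simp add: content_cball mult.assoc)
  have den: "?g * exp (- (1 / 2)) * ?V \<le> measure std_gauss (cball (0::'a) R)"
    using R by (rule measure_std_gauss_cball_ge)
  have "{x::'a. r < norm x} \<in> sets borel" by measurable
  then have "measure (uniform_measure std_gauss (cball 0 R)) {x::'a. r < norm x}
      = measure std_gauss ?T / measure std_gauss (cball (0::'a) R)"
    by (rule measure_gauss_cball[OF R])
  also have "\<dots> \<le> (?g * exp (- (r\<^sup>2 / 2)) * ?V * R ^ DIM('a)) / (?g * exp (- (1 / 2)) * ?V)"
    using num den std_gauss_dens_0_pos[where 'a='a] R V V' by (intro frac_le) auto
  also have "\<dots> = exp (1 / 2) * R ^ DIM('a) * exp (- (r\<^sup>2 / 2))"
    using std_gauss_dens_0_pos[where 'a='a] V V' by (simp add: field_simps exp_minus)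
  finally show ?thesis .
qed

section \<open>Nets on the sphere and hulls containing a ball\<close>

lemma norm_sgn_diff_le:
  fixes x v :: "'a::real_normed_vector"
  assumes "norm v = 1"
  shows "norm (sgn x - v) \<le> 2 * norm (x - v)"
proof (cases "x = 0")
  case False
  have "norm (sgn x - x) = \<bar>1 - norm x\<bar>"
  proof -
    have "sgn x - x = (1 / norm x - 1) *\<^sub>R x"
      by (simp add: sgn_div_norm algebra_simps divide_inverse)
    then have "norm (sgn x - x) = \<bar>(1 / norm x - 1) * norm x\<bar>"
      by (simp add: abs_mult)
    then show ?thesis
      using False by (simp add: left_diff_distrib)
  qed
  also have "\<dots> \<le> norm (x - v)"
    using norm_triangle_ineq3[of x v] assms by (simp add: abs_minus_commute)
  finally show ?thesis
    using norm_triangle_ineq[of "sgn x - x" "x - v"] by simp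
qed (use assms in simp)

definition euclidean_grid :: "real \<Rightarrow> nat \<Rightarrow> 'a::euclidean_space set" where
  "euclidean_grid h M = (\<lambda>m. \<Sum>b\<in>Basis. (of_int (m b) * h) *\<^sub>R b) ` (Basis \<rightarrow>\<^sub>E {- int M..int M})"

lemma finite_euclidean_grid: "finite (euclidean_grid h M)"
  by (simp add: euclidean_grid_def finite_PiE)

lemma card_euclidean_grid_le: "card (euclidean_grid h M :: 'a::euclidean_space set) \<le> (2 * M + 1) ^ DIM('a)"
proof -
  have "card (euclidean_grid h M :: 'a set) \<le> card ((Basis :: 'a set) \<rightarrow>\<^sub>E {- int M..int M})"
    unfolding euclidean_grid_def by (rule card_image_le) (simp add: finite_PiE)
  also have "\<dots> = (2 * M + 1) ^ DIM('a)"
  proof -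
    have "nat (2 * int M + 1) = 2 * M + 1" using nat_int[of "2 * M + 1"] by simp
    then show ?thesis by (simp add: card_PiE)
  qed
  finally show ?thesis .
qed

lemma euclidean_grid_approx:
  fixes v :: "'a::euclidean_space" and h :: real
  assumes h: "0 < h" and v: "norm v \<le> 1" and M: "1 / h \<le> real M"
  shows "\<exists>g \<in> euclidean_grid h M. norm (g - v) \<le> DIM('a) * h"
proof -
  define m where "m = restrict (\<lambda>b. \<lfloor>inner v b / h\<rfloor>) Basis"
  define g :: 'a where "g = (\<Sum>b\<in>Basis. (of_int (m b) * h) *\<^sub>R b)"
  have "\<lfloor>inner v b / h\<rfloor> \<in> {- int M..int M}" if "b \<in> Basis" for b
  proof -
    have "\<bar>inner v b\<bar> \<le> 1" using Basis_le_norm[OF that, of v] v by simp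
    then have "inner v b / h \<le> 1 / h" "(- 1) / h \<le> inner v b / h"
      using h divide_right_mono[of "inner v b" 1 h] divide_right_mono[of "-1" "inner v b" h]
      by (auto simp: abs_le_iff)
    then show ?thesis
      using M by (auto simp: le_floor_iff floor_le_iff)
  qed
  then have "m \<in> Basis \<rightarrow>\<^sub>E {- int M..int M}"
    by (auto simp: m_def)
  then have "g \<in> euclidean_grid h M"
    unfolding euclidean_grid_def g_def by (rule imageI)
  have coord: "\<bar>inner (g - v) b\<bar> \<le> h" if b: "b \<in> Basis" for b
  proof -
    have "inner g b = of_int \<lfloor>inner v b / h\<rfloor> * h"
      using b by (simp add: g_def m_def inner_sum_left inner_Basis if_distrib sum.delta' cong: if_cong)
    moreover have "of_int \<lfloor>inner v b / h\<rfloor> * h \<le> inner v b" "inner v b < (of_int \<lfloor>inner v b / h\<rfloor> + 1) * h"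
      using h by (metis floor_divide_lower, metis floor_divide_upper)
    ultimately show ?thesis by (simp add: inner_diff_left algebra_simps)
  qed
  have "norm (g - v) \<le> (\<Sum>b\<in>Basis. \<bar>inner (g - v) b\<bar>)"
    by (rule norm_le_l1)
  also have "\<dots> \<le> DIM('a) * h"
    using sum_mono[OF coord] by simp
  finally show ?thesis
    using \<open>g \<in> euclidean_grid h M\<close> by blast
qed

lemma unit_sphere_net:
  fixes \<eta> :: real
  assumes \<eta>: "0 < \<eta>" "\<eta> \<le> 1"
  obtains N :: "'a::euclidean_space set"
  where "finite N" "real (card N) \<le> (4 * DIM('a) / \<eta> + 3) ^ DIM('a)"
    and "\<And>u. u \<in> N \<Longrightarrow> norm u = 1" and "\<And>v. norm v = 1 \<Longrightarrow> \<exists>u\<in>N. norm (u - v) \<le> \<eta>"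
proof
  define h where "h = \<eta> / (2 * DIM('a))"
  define M where "M = nat \<lceil>2 * DIM('a) / \<eta>\<rceil>"
  define N where "N = sgn ` (euclidean_grid h M - {0 :: 'a})"
  show "finite N" by (simp add: N_def finite_euclidean_grid)
  have "card N \<le> card (euclidean_grid h M :: 'a set)"
    unfolding N_def by (meson card_image_le card_mono Diff_subset finite_Diff order.trans finite_euclidean_grid)
  also have "\<dots> \<le> (2 * M + 1) ^ DIM('a)"
    by (rule card_euclidean_grid_le)
  finally have "real (card N) \<le> (2 * real M + 1) ^ DIM('a)"
    by (metis of_nat_le_iff of_nat_power of_nat_Suc of_nat_mult of_nat_numeral Suc_eq_plus1_left add.commute)
  also have "\<dots> \<le> (4 * DIM('a) / \<eta> + 3) ^ DIM('a)"
  proof -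
    have "real M = of_int \<lceil>2 * real DIM('a) / \<eta>\<rceil>"
      using \<eta> by (simp add: M_def)
    then have "real M \<le> 2 * DIM('a) / \<eta> + 1"
      using ceiling_correct[of "2 * real DIM('a) / \<eta>"] by linarith
    moreover have "4 * real DIM('a) / \<eta> = 2 * (2 * real DIM('a) / \<eta>)" by simp
    ultimately show ?thesis
      by (intro power_mono) linarith+
  qed
  finally show "real (card N) \<le> (4 * DIM('a) / \<eta> + 3) ^ DIM('a)" .
  show "norm u = 1" if "u \<in> N" for u
    using that by (auto simp: N_def norm_sgn split: if_splits)
  show "\<exists>u\<in>N. norm (u - v) \<le> \<eta>" if v: "norm v = 1" for v
  proof -
    have "0 < h" "1 / h \<le> real M" "DIM('a) * h = \<eta> / 2"
      using \<eta> by (auto simp: h_def M_def)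
    then obtain g where g: "g \<in> euclidean_grid h M" "norm (g - v) \<le> \<eta> / 2"
      using euclidean_grid_approx[of h v M] v by auto
    have "g \<noteq> 0" using g(2) v \<eta> by auto
    then have "sgn g \<in> N" using g(1) by (auto simp: N_def)
    moreover have "norm (sgn g - v) \<le> \<eta>"
      using norm_sgn_diff_le[OF v, of g] g(2) by linarith
    ultimately show ?thesis by blast
  qed
qed

lemma cball_subset_convex_hull:
  fixes S :: "'a::euclidean_space set"
  assumes S: "finite S" and support: "\<And>v. norm v = 1 \<Longrightarrow> \<exists>y\<in>S. r \<le> inner y v"
  shows "cball 0 r \<subseteq> convex hull S"
proof
  fix x :: 'a assume x: "x \<in> cball 0 r"
  obtain b :: 'a where "b \<in> Basis" using nonempty_Basis by blast
  then have "S \<noteq> {}" using support[of b] by auto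
  have "\<exists>y\<in>S. inner x u \<le> inner y u" for u
  proof (cases "u = 0")
    case True
    then show ?thesis using \<open>S \<noteq> {}\<close> by auto
  next
    case False
    then obtain y where y: "y \<in> S" "r \<le> inner y (sgn u)"
      using support[of "sgn u"] by (auto simp: norm_sgn)
    have "inner x (sgn u) \<le> norm x"
      using Cauchy_Schwarz_ineq2[of x "sgn u"] False by (simp add: norm_sgn)
    with x y have "inner x (sgn u) \<le> inner y (sgn u)" by simp
    then have "inner x u / norm u \<le> inner y u / norm u"
      by (simp add: sgn_div_norm divide_inverse_commute)
    with y(1) False show ?thesis by (auto simp: divide_le_cancel)
  qed
  then show "x \<in> convex hull S"
    using convex_hull_mem_iff_dense_support[OF S \<open>S \<noteq> {}\<close>, of UNIV] by blast
qed

lemma hull_vol_eq_if_inside_cball: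
  fixes \<omega> :: "nat \<Rightarrow> 'a::euclidean_space"
  assumes "n \<le> n'" and support: "\<And>v. norm v = 1 \<Longrightarrow> \<exists>i<n. r \<le> inner (\<omega> i) v"
    and inside: "\<And>i. n \<le> i \<Longrightarrow> i < n' \<Longrightarrow> norm (\<omega> i) \<le> r"
  shows "hull_vol n' \<omega> = hull_vol n \<omega>"
proof -
  have ball: "cball 0 r \<subseteq> convex hull (\<omega> ` {..<n})"
    using support by (intro cball_subset_convex_hull) auto
  have "\<omega> ` {..<n'} \<subseteq> convex hull (\<omega> ` {..<n})"
  proof
    fix y assume "y \<in> \<omega> ` {..<n'}"
    then obtain i where "i < n'" "y = \<omega> i" by auto
    then show "y \<in> convex hull (\<omega> ` {..<n})"
      using ball inside[of i] by (cases "i < n") (auto intro: hull_inc)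
  qed
  then have "convex hull (\<omega> ` {..<n'}) = convex hull (\<omega> ` {..<n})"
    using assms(1) by (intro antisym hull_minimal convex_convex_hull hull_mono image_mono) auto
  then show ?thesis by (simp add: hull_vol_def)
qed

lemma hull_vol_le_cball_vol:
  fixes \<omega> :: "nat \<Rightarrow> 'a::euclidean_space"
  assumes "0 \<le> R" "\<And>i. i < k \<Longrightarrow> \<omega> i \<in> cball 0 R"
  shows "hull_vol k \<omega> \<le> unit_ball_vol (real DIM('a)) * R ^ DIM('a)"
proof -
  have "convex hull (\<omega> ` {..<k}) \<subseteq> cball 0 R"
    using assms(2) by (intro hull_minimal) auto
  then have "measure lborel (convex hull (\<omega> ` {..<k})) \<le> measure lborel (cball (0::'a) R)"
    using emeasure_bounded_finite[OF bounded_cball, of "0::'a" R]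
    by (intro measure_mono_fmeasurable) (auto simp: finite_imp_compact_convex_hull compact_imp_closed fmeasurable_def)
  then show ?thesis
    using assms(1) by (simp add: hull_vol_def content_cball)
qed

lemma inner_ge_net_point:
  fixes y u v :: "'a::real_inner" and \<eta> R :: real
  assumes "norm (u - v) \<le> \<eta>" "norm y \<le> R"
  shows "inner y u - \<eta> * R \<le> inner y v"
proof -
  have "0 \<le> R" using assms(2) norm_ge_zero order_trans by blast
  have "\<bar>inner y (u - v)\<bar> \<le> norm y * norm (u - v)"
    by (rule Cauchy_Schwarz_ineq2)
  also have "\<dots> \<le> R * \<eta>"
    using assms \<open>0 \<le> R\<close> by (intro mult_mono) auto
  finally have "\<bar>inner y (u - v)\<bar> \<le> R * \<eta>" .
  then show ?thesis
    by (auto simp: inner_diff_right abs_le_iff mult.commute)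
qed

lemma hull_vol_eq_if_net_halfspaces_hit:
  fixes \<omega> :: "nat \<Rightarrow> 'a::euclidean_space"
  assumes "n \<le> n'" and net: "\<And>v. norm v = 1 \<Longrightarrow> \<exists>u\<in>N. norm (u - v) \<le> \<eta>" and "r \<le> a - \<eta> * R"
    and bounded: "\<And>i. i < n \<Longrightarrow> norm (\<omega> i) \<le> R"
    and hit: "\<And>u. u \<in> N \<Longrightarrow> \<exists>i<n. a \<le> inner (\<omega> i) u"
    and inside: "\<And>i. n \<le> i \<Longrightarrow> i < n' \<Longrightarrow> norm (\<omega> i) \<le> r"
  shows "hull_vol n' \<omega> = hull_vol n \<omega>"
proof (rule hull_vol_eq_if_inside_cball[OF \<open>n \<le> n'\<close> _ inside])
  fix v :: 'a assume "norm v = 1"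
  then obtain u where u: "u \<in> N" "norm (u - v) \<le> \<eta>" using net by blast
  then obtain i where i: "i < n" "a \<le> inner (\<omega> i) u" using hit by blast
  then have "a - \<eta> * R \<le> inner (\<omega> i) v"
    using inner_ge_net_point[OF u(2) bounded[OF i(1)]] by linarith
  then show "\<exists>i<n. r \<le> inner (\<omega> i) v"
    using i(1) \<open>r \<le> a - \<eta> * R\<close> by (intro exI[of _ i]) auto
qed

section \<open>Coupled random variables\<close>

context prob_space
begin

lemma abs_expectation_le_indicator:
  fixes F :: "'a \<Rightarrow> real"
  assumes F: "F \<in> borel_measurable M" and C: "0 \<le> C" and D: "D \<in> events"
    and bound: "AE x in M. \<bar>F x\<bar> \<le> C * indicator D x"
  shows "\<bar>expectation F\<bar> \<le> C * prob D"
proof -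
  have "AE x in M. norm (F x) \<le> C"
    using bound by eventually_elim (use C in \<open>auto simp: indicator_def of_bool_def split: if_splits\<close>)
  then have "integrable M F"
    using F by (intro integrable_const_bound)
  moreover have "integrable M (\<lambda>x. C * indicator D x)"
    using D by (intro integrable_mult_right integrable_const_bound[where B=1]) (auto simp: indicator_def)
  ultimately have "expectation (\<lambda>x. \<bar>F x\<bar>) \<le> expectation (\<lambda>x. C * indicator D x)"
    using bound by (intro integral_mono_AE) auto
  with integral_norm_bound[of M F] have "\<bar>expectation F\<bar> \<le> expectation (\<lambda>x. C * indicator D x)"
    unfolding real_norm_def by linarith
  also have "\<dots> = C * prob D"
    using D by simp
  finally show ?thesis .
qed

lemma coupling_expectation_diff:
  fixes X Y :: "'a \<Rightarrow> real"
  assumes X: "X \<in> borel_measurable M" and Y: "Y \<in> borel_measurable M"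
    and bX: "AE x in M. 0 \<le> X x \<and> X x \<le> B" and bY: "AE x in M. 0 \<le> Y x \<and> Y x \<le> B"
    and D: "D \<in> events" and XY: "\<And>x. x \<in> space M \<Longrightarrow> X x \<noteq> Y x \<Longrightarrow> x \<in> D"
  shows "\<bar>expectation X - expectation Y\<bar> \<le> B * prob D"
proof -
  have "AE x in M. norm (X x) \<le> B"
    using bX by eventually_elim auto
  then have intX: "integrable M X" using X by (rule integrable_const_bound)
  have "AE x in M. norm (Y x) \<le> B"
    using bY by eventually_elim auto
  then have intY: "integrable M Y" using Y by (rule integrable_const_bound)
  have "expectation X - expectation Y = expectation (\<lambda>x. X x - Y x)"
    using intX intY by simp
  moreover have "AE x in M. \<bar>X x - Y x\<bar> \<le> B * indicator D x"
    using bX bY AE_space by eventually_elim (auto simp: indicator_def dest: XY)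
  moreover have "AE x in M. 0 \<le> B"
    using bX by eventually_elim auto
  ultimately show ?thesis
    using D X Y by (metis abs_expectation_le_indicator borel_measurable_diff AE_const)
qed

lemma coupling_variance_diff:
  fixes X Y :: "'a \<Rightarrow> real"
  assumes X[measurable]: "X \<in> borel_measurable M" and Y[measurable]: "Y \<in> borel_measurable M"
    and bX: "AE x in M. 0 \<le> X x \<and> X x \<le> B" and bY: "AE x in M. 0 \<le> Y x \<and> Y x \<le> B"
    and D: "D \<in> events" and XY: "\<And>x. x \<in> space M \<Longrightarrow> X x \<noteq> Y x \<Longrightarrow> x \<in> D"
  shows "\<bar>variance X - variance Y\<bar> \<le> 3 * B\<^sup>2 * prob D"
proof -
  have "AE x in M. 0 \<le> B"
    using bX by eventually_elim auto
  then have B: "0 \<le> B" by simp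
  have sqX: "AE x in M. 0 \<le> (X x)\<^sup>2 \<and> (X x)\<^sup>2 \<le> B\<^sup>2"
    using bX by eventually_elim (auto intro: power_mono)
  have sqY: "AE x in M. 0 \<le> (Y x)\<^sup>2 \<and> (Y x)\<^sup>2 \<le> B\<^sup>2"
    using bY by eventually_elim (auto intro: power_mono)
  have "AE x in M. norm (X x) \<le> B" "AE x in M. norm (Y x) \<le> B"
    "AE x in M. norm ((X x)\<^sup>2) \<le> B\<^sup>2" "AE x in M. norm ((Y x)\<^sup>2) \<le> B\<^sup>2"
    using bX bY sqX sqY by (eventually_elim, auto)+
  note bounded = integrable_const_bound[OF this(1)] integrable_const_bound[OF this(2)]
    integrable_const_bound[OF this(3)] integrable_const_bound[OF this(4)]
  have int: "integrable M X" "integrable M Y"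
    and int2: "integrable M (\<lambda>x. (X x)\<^sup>2)" "integrable M (\<lambda>x. (Y x)\<^sup>2)"
    by (rule bounded; measurable)+
  have "AE x in M. 0 \<le> X x" "AE x in M. X x \<le> B" "AE x in M. 0 \<le> Y x" "AE x in M. Y x \<le> B"
    using bX bY by auto
  then have "0 \<le> expectation X" "expectation X \<le> B" "0 \<le> expectation Y" "expectation Y \<le> B"
    using int by (auto intro: integral_ge_const integral_le_const)
  then have "\<bar>expectation X\<bar> \<le> B" "\<bar>expectation Y\<bar> \<le> B"
    by auto
  then have "\<bar>(expectation X)\<^sup>2 - (expectation Y)\<^sup>2\<bar> \<le> 2 * B * (B * prob D)"
    unfolding power2_eq_square square_diff_square_factored abs_mult
    using coupling_expectation_diff[OF X Y bX bY D XY] B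
    by (intro mult_mono) auto
  moreover have "\<bar>expectation (\<lambda>x. (X x)\<^sup>2) - expectation (\<lambda>x. (Y x)\<^sup>2)\<bar> \<le> B\<^sup>2 * prob D"
    using sqX sqY D by (intro coupling_expectation_diff) (auto intro: XY)
  ultimately show ?thesis
    using variance_eq[OF int(1) int2(1)] variance_eq[OF int(2) int2(2)] by (simp add: power2_eq_square)
qed

lemma coupling_cdf_diff:
  fixes X Y :: "'a \<Rightarrow> real"
  assumes [measurable]: "X \<in> borel_measurable M" "Y \<in> borel_measurable M" "D \<in> events"
    and XY: "\<And>x. x \<in> space M \<Longrightarrow> X x \<noteq> Y x \<Longrightarrow> x \<in> D"
  shows "\<bar>prob {x\<in>space M. X x \<le> t} - prob {x\<in>space M. Y x \<le> t}\<bar> \<le> prob D"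
proof -
  have "prob {x\<in>space M. X x \<le> t} \<le> prob ({x\<in>space M. Y x \<le> t} \<union> D)"
    using XY by (intro finite_measure_mono) (fastforce, measurable)
  moreover have "prob {x\<in>space M. Y x \<le> t} \<le> prob ({x\<in>space M. X x \<le> t} \<union> D)"
    using XY by (intro finite_measure_mono) (fastforce, measurable)
  ultimately show ?thesis
    using measure_Un_le[of "{x\<in>space M. X x \<le> t}" M D] measure_Un_le[of "{x\<in>space M. Y x \<le> t}" M D]
    by (auto simp: measure_nonneg)
qed

end

section \<open>Coupling an n-sample with an n'-sample\<close>

lemma PiM_cylinder:
  fixes P :: "'a measure"
  assumes P: "prob_space P" and J: "J \<subseteq> I" "finite J" and S: "S \<in> sets P"
  shows "{\<omega>\<in>space (PiM I (\<lambda>_. P)). \<forall>i\<in>J. \<omega> i \<in> S} \<in> sets (PiM I (\<lambda>_. P))"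
    and "measure (PiM I (\<lambda>_. P)) {\<omega>\<in>space (PiM I (\<lambda>_. P)). \<forall>i\<in>J. \<omega> i \<in> S} = measure P S ^ card J"
proof -
  interpret P: prob_space P by (rule P)
  have eq: "{\<omega>\<in>space (PiM I (\<lambda>_. P)). \<forall>i\<in>J. \<omega> i \<in> S} = prod_emb I (\<lambda>_. P) J (PiE J (\<lambda>_. S))"
    using J by (auto simp: prod_emb_def PiE_iff space_PiM extensional_def)
  show "{\<omega>\<in>space (PiM I (\<lambda>_. P)). \<forall>i\<in>J. \<omega> i \<in> S} \<in> sets (PiM I (\<lambda>_. P))"
    unfolding eq using J S by (intro sets_PiM_I) auto
  have "emeasure (PiM I (\<lambda>_. P)) (prod_emb I (\<lambda>_. P) J (PiE J (\<lambda>_. S))) = (\<Prod>i\<in>J. emeasure P S)"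
    using P J S by (intro emeasure_PiM_emb) auto
  also have "\<dots> = ennreal (measure P S ^ card J)"
    by (simp add: P.emeasure_eq_measure prod_ennreal ennreal_power)
  finally show "measure (PiM I (\<lambda>_. P)) {\<omega>\<in>space (PiM I (\<lambda>_. P)). \<forall>i\<in>J. \<omega> i \<in> S} = measure P S ^ card J"
    unfolding eq measure_def by simp
qed

lemma PiM_UN_cylinders:
  fixes P :: "'a measure" and S :: "'f \<Rightarrow> 'a set"
  assumes prob: "prob_space P" and F: "finite F"
    and J_sub: "\<And>f. f \<in> F \<Longrightarrow> J f \<subseteq> I" and J_fin: "\<And>f. f \<in> F \<Longrightarrow> finite (J f)"
    and S_sets: "\<And>f. f \<in> F \<Longrightarrow> S f \<in> sets P"
  defines "C \<equiv> \<lambda>f. {\<omega>\<in>space (PiM I (\<lambda>_. P)). \<forall>i\<in>J f. \<omega> i \<in> S f}"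
  shows "(\<Union>f\<in>F. C f) \<in> sets (PiM I (\<lambda>_. P))"
    and "measure (PiM I (\<lambda>_. P)) (\<Union>f\<in>F. C f) \<le> (\<Sum>f\<in>F. measure P (S f) ^ card (J f))"
proof -
  interpret product_prob_space "\<lambda>_. P" I
    by (intro product_prob_spaceI) (rule prob)
  have sets: "C f \<in> sets (PiM I (\<lambda>_. P))" if "f \<in> F" for f
    unfolding C_def using that by (intro PiM_cylinder(1)[OF prob J_sub J_fin S_sets])
  then show "(\<Union>f\<in>F. C f) \<in> sets (PiM I (\<lambda>_. P))"
    using F by auto
  have "measure (PiM I (\<lambda>_. P)) (\<Union>f\<in>F. C f) \<le> (\<Sum>f\<in>F. measure (PiM I (\<lambda>_. P)) (C f))"
    using F sets by (intro finite_measure_subadditive_finite) auto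
  also have "\<dots> = (\<Sum>f\<in>F. measure P (S f) ^ card (J f))"
    unfolding C_def using J_sub J_fin S_sets by (intro sum.cong refl PiM_cylinder(2)[OF prob])
  finally show "measure (PiM I (\<lambda>_. P)) (\<Union>f\<in>F. C f) \<le> (\<Sum>f\<in>F. measure P (S f) ^ card (J f))" .
qed

lemma hull_vol_coupling_event:
  fixes P :: "'a::euclidean_space measure"
  assumes prob: "prob_space P" and sP: "sets P = sets borel" and out: "measure P (- cball 0 R) = 0"
    and N: "finite N" "\<And>v. norm v = 1 \<Longrightarrow> \<exists>u\<in>N. norm (u - v) \<le> \<eta>" and ar: "r \<le> a - \<eta> * R"
    and miss: "\<And>u. u \<in> N \<Longrightarrow> measure P {x. inner x u < a} \<le> 1 - p"
    and tail: "measure P {x. r < norm x} \<le> \<tau>" and "n \<le> n'"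
  obtains D where "D \<in> sets (PiM {..<n'} (\<lambda>_. P))"
    and "\<And>\<omega>. \<omega> \<in> space (PiM {..<n'} (\<lambda>_. P)) \<Longrightarrow> hull_vol n' \<omega> \<noteq> hull_vol n \<omega> \<Longrightarrow> \<omega> \<in> D"
    and "measure (PiM {..<n'} (\<lambda>_. P)) D \<le> real (card N) * (1 - p) ^ n + real (n' - n) * \<tau>"
    and "AE \<omega> in PiM {..<n'} (\<lambda>_. P). \<forall>i<n'. \<omega> i \<in> cball 0 R"
proof -
  let ?M = "PiM {..<n'} (\<lambda>_. P)" and ?cyl = "\<lambda>J S. {\<omega>\<in>space (PiM {..<n'} (\<lambda>_. P)). \<forall>i\<in>J. \<omega> i \<in> S}"
  interpret product_prob_space "\<lambda>_. P" "{..<n'}"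
    by (intro product_prob_spaceI) (rule prob)
  define B0 where "B0 = (\<Union>i\<in>{..<n'}. ?cyl {i} (- cball 0 R))"
  define B1 where "B1 = (\<Union>u\<in>N. ?cyl {..<n} {x. inner x u < a})"
  define B2 where "B2 = (\<Union>i\<in>{n..<n'}. ?cyl {i} {x. r < norm x})"
  have B0: "B0 \<in> sets ?M" "measure ?M B0 \<le> (\<Sum>i\<in>{..<n'}. measure P (- cball 0 R) ^ card {i})"
    unfolding B0_def using sP by (intro PiM_UN_cylinders[OF prob]; simp)+
  have B1: "B1 \<in> sets ?M" "measure ?M B1 \<le> (\<Sum>u\<in>N. measure P {x. inner x u < a} ^ card {..<n})"
    unfolding B1_def using sP N(1) \<open>n \<le> n'\<close> by (intro PiM_UN_cylinders[OF prob]; simp)+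
  have B2: "B2 \<in> sets ?M" "measure ?M B2 \<le> (\<Sum>i\<in>{n..<n'}. measure P {x. r < norm x} ^ card {i})"
    unfolding B2_def using sP by (intro PiM_UN_cylinders[OF prob]; simp)+
  have "measure ?M B1 \<le> real (card N) * (1 - p) ^ n"
    using B1(2) sum_mono[of N "\<lambda>u. measure P {x. inner x u < a} ^ n" "\<lambda>_. (1 - p) ^ n"] miss
    by (simp add: power_mono)
  moreover have "measure ?M B2 \<le> real (n' - n) * \<tau>"
    using B2(2) tail by simp (meson mult_left_mono of_nat_0_le_iff order_trans)
  moreover have "measure ?M (B0 \<union> B1 \<union> B2) \<le> measure ?M B0 + measure ?M B1 + measure ?M B2"
    using B0(1) B1(1) B2(1) by (meson measure_Un_le sets.Un add_right_mono order_trans)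
  ultimately have measure_D: "measure ?M (B0 \<union> B1 \<union> B2) \<le> real (card N) * (1 - p) ^ n + real (n' - n) * \<tau>"
    using B0(2) out by simp
  have "hull_vol n' \<omega> = hull_vol n \<omega>" if "\<omega> \<in> space ?M" "\<omega> \<notin> B0 \<union> B1 \<union> B2" for \<omega>
    using that \<open>n \<le> n'\<close> by (intro hull_vol_eq_if_net_halfspaces_hit[OF \<open>n \<le> n'\<close> N(2) ar])
      (auto simp: B0_def B1_def B2_def not_less)
  moreover have "AE \<omega> in ?M. \<forall>i<n'. \<omega> i \<in> cball 0 R"
  proof (rule AE_I)
    have "measure ?M B0 = 0"
      using B0(2) out by (simp add: measure_le_0_iff)
    then show "emeasure ?M B0 = 0"
      by (simp add: emeasure_eq_measure)
    show "B0 \<in> sets ?M" by (fact B0(1))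
  qed (auto simp: B0_def)
  ultimately show ?thesis
    using that[of "B0 \<union> B1 \<union> B2"] B0(1) B1(1) B2(1) measure_D by blast
qed

lemma hull_vol_marginal_PiM:
  fixes P :: "'a::euclidean_space measure"
    and g :: "real \<Rightarrow> real"
  assumes prob: "prob_space P" and sP: "sets P = sets borel" and "n \<le> n'"
  shows "g \<in> borel_measurable borel \<Longrightarrow> integral\<^sup>L (PiM {..<n} (\<lambda>_. P)) (\<lambda>\<omega>. g (hull_vol n \<omega>))
      = integral\<^sup>L (PiM {..<n'} (\<lambda>_. P)) (\<lambda>\<omega>. g (hull_vol n \<omega>))"
    and "measure (PiM {..<n} (\<lambda>_. P)) {\<omega>\<in>space (PiM {..<n} (\<lambda>_. P)). hull_vol n \<omega> \<le> t}
      = measure (PiM {..<n'} (\<lambda>_. P)) {\<omega>\<in>space (PiM {..<n'} (\<lambda>_. P)). hull_vol n \<omega> \<le> t}"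
proof -
  let ?M = "PiM {..<n'} (\<lambda>_. P)" and ?Q = "PiM {..<n} (\<lambda>_. P)" and ?res = "\<lambda>\<omega>. restrict \<omega> {..<n}"
  interpret product_prob_space "\<lambda>_. P" "{..<n'}"
    by (intro product_prob_spaceI) (rule prob)
  have marginal: "?Q = distr ?M ?Q ?res"
    using \<open>n \<le> n'\<close> by (intro distr_restrict) auto
  have measurable_res: "?res \<in> measurable ?M ?Q"
    using \<open>n \<le> n'\<close> by (intro measurable_restrict_subset) auto
  have hull_res: "hull_vol n (?res \<omega>) = hull_vol n \<omega>" for \<omega>
    by (simp add: hull_vol_def)
  have h[measurable]: "hull_vol n \<in> borel_measurable ?Q"
    by (rule measurable_hull_vol[OF sP])
  show "integral\<^sup>L ?Q (\<lambda>\<omega>. g (hull_vol n \<omega>)) = integral\<^sup>L ?M (\<lambda>\<omega>. g (hull_vol n \<omega>))"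
    if g[measurable]: "g \<in> borel_measurable borel"
  proof -
    have "integral\<^sup>L (distr ?M ?Q ?res) (\<lambda>\<omega>. g (hull_vol n \<omega>)) = integral\<^sup>L ?M (\<lambda>\<omega>. g (hull_vol n (?res \<omega>)))"
      by (intro integral_distr[OF measurable_res, of "\<lambda>\<omega>. g (hull_vol n \<omega>)"]) measurable
    then show ?thesis
      by (simp add: hull_res flip: marginal)
  qed
  have "{\<omega>\<in>space ?Q. hull_vol n \<omega> \<le> t} \<in> sets ?Q" by measurable
  then show "measure ?Q {\<omega>\<in>space ?Q. hull_vol n \<omega> \<le> t} = measure ?M {\<omega>\<in>space ?M. hull_vol n \<omega> \<le> t}"
    using measure_distr[OF measurable_res, of "{\<omega>\<in>space ?Q. hull_vol n \<omega> \<le> t}"] measurable_space[OF measurable_res]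
    by (simp add: hull_res flip: marginal) (auto intro!: arg_cong[where f="measure ?M"])
qed

lemma hull_vol_stats_diff_le:
  fixes P :: "'a::euclidean_space measure"
  assumes prob: "prob_space P" and sP: "sets P = sets borel" and "n \<le> n'" and R: "0 \<le> R"
    and D: "D \<in> sets (PiM {..<n'} (\<lambda>_. P))"
    and differ: "\<And>\<omega>. \<omega> \<in> space (PiM {..<n'} (\<lambda>_. P)) \<Longrightarrow> hull_vol n' \<omega> \<noteq> hull_vol n \<omega> \<Longrightarrow> \<omega> \<in> D"
    and inside: "AE \<omega> in PiM {..<n'} (\<lambda>_. P). \<forall>i<n'. \<omega> i \<in> cball 0 R"
    and B: "unit_ball_vol (real DIM('a)) * R ^ DIM('a) \<le> B"
  defines "E \<equiv> \<lambda>k. integral\<^sup>L (PiM {..<k} (\<lambda>_. P)) (hull_vol k)"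
  shows "\<bar>E n' - E n\<bar> \<le> B * measure (PiM {..<n'} (\<lambda>_. P)) D"
    and "\<bar>integral\<^sup>L (PiM {..<n'} (\<lambda>_. P)) (\<lambda>\<omega>. (hull_vol n' \<omega> - E n')\<^sup>2)
          - integral\<^sup>L (PiM {..<n} (\<lambda>_. P)) (\<lambda>\<omega>. (hull_vol n \<omega> - E n)\<^sup>2)\<bar>
        \<le> 3 * B\<^sup>2 * measure (PiM {..<n'} (\<lambda>_. P)) D"
    and "\<bar>measure (PiM {..<n'} (\<lambda>_. P)) {\<omega>\<in>space (PiM {..<n'} (\<lambda>_. P)). hull_vol n' \<omega> \<le> t}
          - measure (PiM {..<n} (\<lambda>_. P)) {\<omega>\<in>space (PiM {..<n} (\<lambda>_. P)). hull_vol n \<omega> \<le> t}\<bar>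
        \<le> measure (PiM {..<n'} (\<lambda>_. P)) D"
proof -
  let ?M = "PiM {..<n'} (\<lambda>_. P)"
  interpret product_prob_space "\<lambda>_. P" "{..<n'}"
    by (intro product_prob_spaceI) (rule prob)
  note restrict = hull_vol_marginal_PiM[OF prob sP \<open>n \<le> n'\<close>]
  have E_n: "E n = expectation (hull_vol n)"
    unfolding E_def using restrict(1)[where g="\<lambda>x. x", OF measurable_id] by simp
  have [measurable]: "hull_vol n' \<in> borel_measurable ?M"
    by (rule measurable_hull_vol[OF sP])
  have [measurable]: "hull_vol n \<in> borel_measurable ?M"
  proof -
    have "(\<lambda>\<omega>. hull_vol n (restrict \<omega> {..<n})) \<in> borel_measurable ?M"
      using \<open>n \<le> n'\<close> by (intro measurable_compose[OF measurable_restrict_subset measurable_hull_vol[OF sP]]) auto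
    moreover have "(\<lambda>\<omega>. hull_vol n (restrict \<omega> {..<n})) = hull_vol n"
      by (simp add: fun_eq_iff hull_vol_def)
    ultimately show ?thesis by metis
  qed
  have bounded: "AE \<omega> in ?M. 0 \<le> hull_vol k \<omega> \<and> hull_vol k \<omega> \<le> B" if "k \<le> n'" for k
    using inside by eventually_elim
      (use that R B in \<open>auto simp: hull_vol_def intro: order_trans[OF hull_vol_le_cball_vol[unfolded hull_vol_def]]\<close>)
  note bounds = bounded[OF order_refl] bounded[OF \<open>n \<le> n'\<close>]
  show "\<bar>E n' - E n\<bar> \<le> B * measure ?M D"
    unfolding E_n unfolding E_def using coupling_expectation_diff[OF _ _ bounds D differ] by simp
  have "(\<lambda>x::real. (x - E n)\<^sup>2) \<in> borel_measurable borel" by measurable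
  note restrict_sq = restrict(1)[where g="\<lambda>x. (x - E n)\<^sup>2", OF this]
  show "\<bar>integral\<^sup>L ?M (\<lambda>\<omega>. (hull_vol n' \<omega> - E n')\<^sup>2)
      - integral\<^sup>L (PiM {..<n} (\<lambda>_. P)) (\<lambda>\<omega>. (hull_vol n \<omega> - E n)\<^sup>2)\<bar> \<le> 3 * B\<^sup>2 * measure ?M D"
    using coupling_variance_diff[OF _ _ bounds D differ] restrict_sq
    unfolding E_n by (simp add: E_def)
  show "\<bar>measure ?M {\<omega>\<in>space ?M. hull_vol n' \<omega> \<le> t}
      - measure (PiM {..<n} (\<lambda>_. P)) {\<omega>\<in>space (PiM {..<n} (\<lambda>_. P)). hull_vol n \<omega> \<le> t}\<bar> \<le> measure ?M D"
    using coupling_cdf_diff[OF _ _ D differ] restrict(2)[where t=t] by simp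
qed

section \<open>Asymptotics\<close>

lemma radius_ge:
  assumes c0: "0 \<le> c0" and s: "2 \<le> sqrt (2 * ln (real n))"
  shows "sqrt (2 * ln (real n)) \<le> radius c0 n"
proof -
  have "0 < 2 * ln (real n)"
    using s real_sqrt_gt_0_iff[of "2 * ln (real n)"] by linarith
  moreover from this have "2 * 2 \<le> sqrt (2 * ln (real n)) * sqrt (2 * ln (real n))"
    using s by (intro mult_mono) auto
  ultimately have "1 \<le> ln (real n)" by simp
  then show ?thesis
    unfolding radius_def using c0 by (intro real_sqrt_le_mono) (simp add: ln_powr)
qed

lemma Psi'_bounds:
  fixes c0 s :: real and n :: nat
  assumes s: "4 \<le> s" "s \<le> radius c0 n" "radius c0 n \<le> s\<^sup>2"
  shows "prob_space (Psi' c0 n :: 'a::euclidean_space measure)"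
    and "measure (Psi' c0 n :: 'a measure) (- cball 0 (radius c0 n)) = 0"
    and "\<And>u::'a. norm u = 1 \<Longrightarrow>
      measure (Psi' c0 n) {x. inner x u < s - 3} \<le> 1 - exp (- ((s - 1)\<^sup>2 / 2)) / s ^ (2 * DIM('a))"
    and "measure (Psi' c0 n :: 'a measure) {x. s - 4 < norm x}
      \<le> exp (1 / 2) * s ^ (2 * DIM('a)) * exp (- ((s - 4)\<^sup>2 / 2))"
proof -
  let ?R = "radius c0 n" and ?P = "Psi' c0 n :: 'a measure"
  have R: "1 \<le> ?R" using s by linarith
  have Rd: "?R ^ DIM('a) \<le> s ^ (2 * DIM('a))"
    unfolding power_mult using s R by (intro power_mono) auto
  show prob: "prob_space ?P"
    unfolding Psi'_def using R by (rule prob_space_gauss_cball)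
  then interpret prob_space ?P .
  show "measure ?P (- cball 0 ?R) = 0"
    unfolding Psi'_def using R by (simp add: measure_gauss_cball)
  show "measure ?P {x. inner x u < s - 3} \<le> 1 - exp (- ((s - 1)\<^sup>2 / 2)) / s ^ (2 * DIM('a))"
    if u: "norm u = 1" for u :: 'a
  proof -
    have "exp (- ((s - 1)\<^sup>2 / 2)) / s ^ (2 * DIM('a)) \<le> exp (- ((s - 1)\<^sup>2 / 2)) / ?R ^ DIM('a)"
      using Rd R s by (intro divide_left_mono) auto
    also have "\<dots> \<le> measure ?P {x. s - 3 \<le> inner x u}"
      using measure_gauss_cball_halfspace_ge[of u "s - 3" ?R] u s unfolding Psi'_def by simp
    also have "\<dots> = 1 - measure ?P {x. inner x u < s - 3}"
    proof -
      have "{x::'a. inner x u < s - 3} \<in> sets borel" by measurable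
      then have "{x. inner x u < s - 3} \<in> events" by (simp add: Psi'_def)
      moreover have "{x. s - 3 \<le> inner x u} = space ?P - {x. inner x u < s - 3}"
        by (auto simp: Psi'_def std_gauss_def)
      ultimately show ?thesis
        by (simp add: prob_compl)
    qed
    finally show ?thesis by simp
  qed
  have "measure ?P {x. s - 4 < norm x} \<le> exp (1 / 2) * ?R ^ DIM('a) * exp (- ((s - 4)\<^sup>2 / 2))"
    unfolding Psi'_def using R s by (intro measure_gauss_cball_norm_gt_le) auto
  also have "\<dots> \<le> exp (1 / 2) * s ^ (2 * DIM('a)) * exp (- ((s - 4)\<^sup>2 / 2))"
    using Rd by (intro mult_right_mono mult_left_mono) auto
  finally show "measure ?P {x. s - 4 < norm x} \<le> exp (1 / 2) * s ^ (2 * DIM('a)) * exp (- ((s - 4)\<^sup>2 / 2))" .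
qed

lemma vol_stats_coupling:
  fixes c0 :: real and n n' :: nat
  defines "s \<equiv> sqrt (2 * ln (real n))"
  assumes c0: "0 \<le> c0" and s: "4 \<le> s" and R: "radius c0 n \<le> s\<^sup>2" and "n \<le> n'"
  defines "d \<equiv> DIM('a::euclidean_space)"
  defines "B \<equiv> unit_ball_vol (real d) * s ^ (2 * d)"
  obtains q where "0 \<le> q"
    and "q \<le> (4 * real d * s\<^sup>2 + 3) ^ d * (1 - exp (- ((s - 1)\<^sup>2 / 2)) / s ^ (2 * d)) ^ n
      + real (n' - n) * (exp (1 / 2) * s ^ (2 * d) * exp (- ((s - 4)\<^sup>2 / 2)))"
    and "\<bar>vol_mean TYPE('a) c0 n n' - vol_mean TYPE('a) c0 n n\<bar> \<le> B * q"
    and "\<bar>vol_var TYPE('a) c0 n n' - vol_var TYPE('a) c0 n n\<bar> \<le> 3 * B\<^sup>2 * q"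
    and "\<And>t. \<bar>vol_cdf TYPE('a) c0 n n' t - vol_cdf TYPE('a) c0 n n t\<bar> \<le> q"
proof -
  let ?P = "Psi' c0 n :: 'a measure" and ?R = "radius c0 n"
  have sR: "s \<le> ?R" unfolding s_def using c0 s by (intro radius_ge) (simp_all add: s_def)
  note Psi = Psi'_bounds[OF s sR R, where 'a='a]
  have sets: "sets ?P = sets borel" by (simp add: Psi'_def)
  have "0 < 1 / s\<^sup>2" "1 / s\<^sup>2 \<le> 1" using s by auto
  then obtain N :: "'a set" where N: "finite N" "real (card N) \<le> (4 * real d * s\<^sup>2 + 3) ^ d"
    "\<And>u. u \<in> N \<Longrightarrow> norm u = 1" "\<And>v. norm v = 1 \<Longrightarrow> \<exists>u\<in>N. norm (u - v) \<le> 1 / s\<^sup>2"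
    by (rule unit_sphere_net) (auto simp: d_def)
  have "s - 4 \<le> (s - 3) - 1 / s\<^sup>2 * ?R"
    using R s by (simp add: field_simps)
  then obtain D where D: "D \<in> sets (PiM {..<n'} (\<lambda>_. ?P))"
    "\<And>\<omega>. \<omega> \<in> space (PiM {..<n'} (\<lambda>_. ?P)) \<Longrightarrow> hull_vol n' \<omega> \<noteq> hull_vol n \<omega> \<Longrightarrow> \<omega> \<in> D"
    "measure (PiM {..<n'} (\<lambda>_. ?P)) D \<le> real (card N) * (1 - exp (- ((s - 1)\<^sup>2 / 2)) / s ^ (2 * d)) ^ n
      + real (n' - n) * (exp (1 / 2) * s ^ (2 * d) * exp (- ((s - 4)\<^sup>2 / 2)))"
    "AE \<omega> in PiM {..<n'} (\<lambda>_. ?P). \<forall>i<n'. \<omega> i \<in> cball 0 ?R"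
    using hull_vol_coupling_event[OF Psi(1) sets Psi(2) N(1) N(4) _ Psi(3)[OF N(3)] Psi(4) \<open>n \<le> n'\<close>]
    unfolding d_def by blast
  have R0: "0 \<le> ?R" using sR s by linarith
  have "unit_ball_vol (real DIM('a)) * ?R ^ DIM('a) \<le> B"
    unfolding B_def d_def power_mult using R R0 by (intro mult_left_mono power_mono) auto
  note stats = hull_vol_stats_diff_le[OF Psi(1) sets \<open>n \<le> n'\<close> R0 D(1,2,4) this]
  have "1 \<le> s ^ (2 * d)" using s by (simp add: one_le_power)
  moreover have "exp (- ((s - 1)\<^sup>2 / 2)) \<le> 1" by simp
  ultimately have "exp (- ((s - 1)\<^sup>2 / 2)) \<le> s ^ (2 * d)" by linarith
  with \<open>1 \<le> s ^ (2 * d)\<close> have "0 \<le> (1 - exp (- ((s - 1)\<^sup>2 / 2)) / s ^ (2 * d)) ^ n"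
    by (intro zero_le_power) (simp add: divide_le_eq_1)
  then have "measure (PiM {..<n'} (\<lambda>_. ?P)) D \<le> (4 * real d * s\<^sup>2 + 3) ^ d * (1 - exp (- ((s - 1)\<^sup>2 / 2)) / s ^ (2 * d)) ^ n
      + real (n' - n) * (exp (1 / 2) * s ^ (2 * d) * exp (- ((s - 4)\<^sup>2 / 2)))"
    using D(3) mult_right_mono[OF N(2)] by fastforce
  then show ?thesis
  proof (rule that[OF measure_nonneg])
    show "\<bar>vol_mean TYPE('a) c0 n n' - vol_mean TYPE('a) c0 n n\<bar> \<le> B * measure (PiM {..<n'} (\<lambda>_. ?P)) D"
      using stats(1) by (simp add: vol_mean_def sample_def)
    show "\<bar>vol_var TYPE('a) c0 n n' - vol_var TYPE('a) c0 n n\<bar> \<le> 3 * B\<^sup>2 * measure (PiM {..<n'} (\<lambda>_. ?P)) D"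
      using stats(2) by (simp add: vol_var_def vol_mean_def sample_def)
    show "\<bar>vol_cdf TYPE('a) c0 n n' t - vol_cdf TYPE('a) c0 n n t\<bar> \<le> measure (PiM {..<n'} (\<lambda>_. ?P)) D" for t
      using stats(3)[of t] by (simp add: vol_cdf_def sample_def)
  qed
qed

lemma one_minus_power_le_exp:
  fixes p :: real
  assumes "0 \<le> p" "p \<le> 1"
  shows "(1 - p) ^ n \<le> exp (- (p * real n))"
proof -
  have "(1 - p) ^ n \<le> exp (- p) ^ n"
    using assms by (intro power_mono) (auto simp: exp_minus_ge)
  then show ?thesis
    by (simp add: exp_of_nat_mult[symmetric] mult.commute)
qed

lemma sqrt_mult_ln_le:
  assumes n: "real n = exp (s\<^sup>2 / 2)" and s: "0 \<le> s"
  shows "sqrt (real n * ln (real n)) \<le> s * exp (s\<^sup>2 / 4)"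
proof -
  have "(exp (s\<^sup>2 / 4))\<^sup>2 = exp (s\<^sup>2 / 2)"
    by (subst exp_double[symmetric]) simp
  then have "(s * exp (s\<^sup>2 / 4))\<^sup>2 = s\<^sup>2 * exp (s\<^sup>2 / 2)"
    by (simp add: power_mult_distrib)
  moreover have "real n * ln (real n) = exp (s\<^sup>2 / 2) * (s\<^sup>2 / 2)"
    using n by simp
  moreover have "exp (s\<^sup>2 / 2) * (s\<^sup>2 / 2) \<le> s\<^sup>2 * exp (s\<^sup>2 / 2)"
    using mult_left_mono[of "s\<^sup>2 / 2" "s\<^sup>2" "exp (s\<^sup>2 / 2)"] by (simp add: mult.commute)
  ultimately have "real n * ln (real n) \<le> (s * exp (s\<^sup>2 / 4))\<^sup>2"
    by linarith
  from real_sqrt_le_mono[OF this] show ?thesis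
    using s by simp
qed

lemma coupling_miss_term_le:
  fixes s :: real and n d :: nat
  assumes s: "1 \<le> s" and d: "1 \<le> d" and n: "real n = exp (s\<^sup>2 / 2)"
  shows "(4 * real d * s\<^sup>2 + 3) ^ d * (1 - exp (- ((s - 1)\<^sup>2 / 2)) / s ^ (2 * d)) ^ n
    \<le> (7 * real d) ^ d * s ^ (2 * d) * exp (- exp (s - 1 / 2) / s ^ (2 * d))"
proof -
  define p where "p = exp (- ((s - 1)\<^sup>2 / 2)) / s ^ (2 * d)"
  have "1 \<le> s ^ (2 * d)" using s by (simp add: one_le_power)
  moreover have "exp (- ((s - 1)\<^sup>2 / 2)) \<le> 1" by simp
  ultimately have "exp (- ((s - 1)\<^sup>2 / 2)) \<le> s ^ (2 * d)" by linarith
  with \<open>1 \<le> s ^ (2 * d)\<close> have p: "0 \<le> p" "p \<le> 1"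
    unfolding p_def by (auto simp: divide_le_eq_1)
  have "p * real n = exp (s - 1 / 2) / s ^ (2 * d)"
    unfolding p_def n by (simp add: exp_add[symmetric] power2_eq_square field_simps)
  then have miss: "(1 - p) ^ n \<le> exp (- (exp (s - 1 / 2) / s ^ (2 * d)))"
    using one_minus_power_le_exp[OF p, where n=n] by simp
  have "1 \<le> s\<^sup>2" using s by (simp add: one_le_power)
  moreover have "1 \<le> real d" using d by simp
  ultimately have "1 \<le> real d * s\<^sup>2" using mult_mono[of 1 "real d" 1 "s\<^sup>2"] by simp
  then have "(4 * real d * s\<^sup>2 + 3) ^ d \<le> (7 * real d * s\<^sup>2) ^ d"
    by (intro power_mono) auto
  also have "\<dots> = (7 * real d) ^ d * s ^ (2 * d)"
    by (simp add: power_mult power_mult_distrib)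
  finally show ?thesis
    using miss p unfolding p_def by (intro mult_mono) auto
qed

lemma coupling_escape_term_le:
  fixes s D A :: real and n d :: nat
  assumes s: "0 \<le> s" and n: "real n = exp (s\<^sup>2 / 2)"
    and D: "D \<le> A * sqrt (real n * ln (real n))" and A: "0 \<le> A"
  shows "D * (exp (1 / 2) * s ^ (2 * d) * exp (- ((s - 4)\<^sup>2 / 2)))
    \<le> A * exp (1 / 2) * s ^ (2 * d + 1) * exp (s\<^sup>2 / 4 - (s - 4)\<^sup>2 / 2)"
proof -
  have "D \<le> A * (s * exp (s\<^sup>2 / 4))"
    using D mult_left_mono[OF sqrt_mult_ln_le[OF n s] A] by linarith
  then have "D * (exp (1 / 2) * s ^ (2 * d) * exp (- ((s - 4)\<^sup>2 / 2)))
      \<le> A * (s * exp (s\<^sup>2 / 4)) * (exp (1 / 2) * s ^ (2 * d) * exp (- ((s - 4)\<^sup>2 / 2)))"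
    using s by (intro mult_right_mono) auto
  also have "exp (s\<^sup>2 / 4 - (s - 4)\<^sup>2 / 2) = exp (s\<^sup>2 / 4) * exp (- ((s - 4)\<^sup>2 / 2))"
    by (simp add: exp_add[symmetric])
  then have "A * (s * exp (s\<^sup>2 / 4)) * (exp (1 / 2) * s ^ (2 * d) * exp (- ((s - 4)\<^sup>2 / 2)))
      = A * exp (1 / 2) * s ^ (2 * d + 1) * exp (s\<^sup>2 / 4 - (s - 4)\<^sup>2 / 2)"
    by (simp add: power_add mult_ac)
  finally show ?thesis .
qed

text \<open>The first factor is 1 + B + 3 B^2 for B = vol B(s^2), which dominates every hull volume; the
  second bounds the probability that the coupling fails.\<close>
definition hull_coupling_error :: "nat \<Rightarrow> real \<Rightarrow> real \<Rightarrow> real \<Rightarrow> real" where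
  "hull_coupling_error d V A s =
    (1 + V * s ^ (2 * d) + 3 * V\<^sup>2 * s ^ (4 * d)) *
    ((7 * real d) ^ d * s ^ (2 * d) * exp (- exp (s - 1 / 2) / s ^ (2 * d))
      + A * exp (1 / 2) * s ^ (2 * d + 1) * exp (s\<^sup>2 / 4 - (s - 4)\<^sup>2 / 2))"

lemma eventually_hull_coupling_error_le:
  "\<forall>\<^sub>F s in at_top. hull_coupling_error d V A s \<le> exp (- (s\<^sup>2 / 4) + 7 * s)"
  unfolding hull_coupling_error_def by real_asymp

lemma vol_stats_diff_le_coupling_error:
  fixes c0 A :: real and n n' :: nat
  defines "s \<equiv> sqrt (2 * ln (real n))"
  assumes c0: "0 \<le> c0" and s: "4 \<le> s" and R: "radius c0 n \<le> s\<^sup>2" and A: "0 \<le> A"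
    and n': "n \<le> n'" "real n' \<le> real n + A * sqrt (real n * ln (real n))"
  defines "\<epsilon> \<equiv> hull_coupling_error DIM('a::euclidean_space) (unit_ball_vol (real DIM('a))) A s"
  shows "\<bar>vol_mean TYPE('a) c0 n n' - vol_mean TYPE('a) c0 n n\<bar> \<le> \<epsilon>"
    and "\<bar>vol_var TYPE('a) c0 n n' - vol_var TYPE('a) c0 n n\<bar> \<le> \<epsilon>"
    and "\<bar>vol_cdf TYPE('a) c0 n n' t - vol_cdf TYPE('a) c0 n n t\<bar> \<le> \<epsilon>"
proof -
  let ?d = "DIM('a)" and ?V = "unit_ball_vol (real DIM('a))"
  define B where "B = ?V * s ^ (2 * ?d)"
  obtain q where q: "0 \<le> q"
    "q \<le> (4 * real ?d * s\<^sup>2 + 3) ^ ?d * (1 - exp (- ((s - 1)\<^sup>2 / 2)) / s ^ (2 * ?d)) ^ n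
      + real (n' - n) * (exp (1 / 2) * s ^ (2 * ?d) * exp (- ((s - 4)\<^sup>2 / 2)))"
    and bounds: "\<bar>vol_mean TYPE('a) c0 n n' - vol_mean TYPE('a) c0 n n\<bar> \<le> B * q"
      "\<bar>vol_var TYPE('a) c0 n n' - vol_var TYPE('a) c0 n n\<bar> \<le> 3 * B\<^sup>2 * q"
      "\<bar>vol_cdf TYPE('a) c0 n n' t - vol_cdf TYPE('a) c0 n n t\<bar> \<le> q"
    using vol_stats_coupling[OF c0 s[unfolded s_def] R[unfolded s_def] n'(1), where 'a='a]
    unfolding s_def[symmetric] B_def by metis
  have "0 < ln (real n)"
    using s real_sqrt_gt_0_iff[of "2 * ln (real n)"] unfolding s_def by linarith
  moreover from this have "0 < real n" by (cases "n = 0") auto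
  ultimately have n_exp: "real n = exp (s\<^sup>2 / 2)"
    unfolding s_def by simp
  have "real (n' - n) \<le> A * sqrt (real n * ln (real n))"
    using n' by (simp add: of_nat_diff)
  moreover have "1 \<le> s" "1 \<le> ?d" using s DIM_positive[where 'a='a] by (simp_all add: Suc_le_eq)
  ultimately have "q \<le> (7 * real ?d) ^ ?d * s ^ (2 * ?d) * exp (- exp (s - 1 / 2) / s ^ (2 * ?d))
      + A * exp (1 / 2) * s ^ (2 * ?d + 1) * exp (s\<^sup>2 / 4 - (s - 4)\<^sup>2 / 2)" (is "_ \<le> ?Q")
    using order_trans[OF q(2) add_mono[OF coupling_miss_term_le[OF _ _ n_exp] coupling_escape_term_le[OF _ n_exp _ A]]]
    by simp
  have \<epsilon>: "\<epsilon> = (1 + B + 3 * B\<^sup>2) * ?Q"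
    unfolding \<epsilon>_def hull_coupling_error_def B_def
    by (simp add: power_mult_distrib power_mult[symmetric] mult.commute)
  have "0 \<le> B" unfolding B_def using s by simp
  have scale: "X * q \<le> \<epsilon>" if "0 \<le> X" "X \<le> 1 + B + 3 * B\<^sup>2" for X
    unfolding \<epsilon> using that q(1) \<open>q \<le> ?Q\<close> by (intro mult_mono) auto
  have "B * q \<le> \<epsilon>" "3 * B\<^sup>2 * q \<le> \<epsilon>" "1 * q \<le> \<epsilon>"
    using \<open>0 \<le> B\<close> zero_le_power2[of B] by (intro scale; linarith)+
  then show "\<bar>vol_mean TYPE('a) c0 n n' - vol_mean TYPE('a) c0 n n\<bar> \<le> \<epsilon>"
    and "\<bar>vol_var TYPE('a) c0 n n' - vol_var TYPE('a) c0 n n\<bar> \<le> \<epsilon>"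
    and "\<bar>vol_cdf TYPE('a) c0 n n' t - vol_cdf TYPE('a) c0 n n t\<bar> \<le> \<epsilon>"
    using bounds by linarith+
qed

lemma eventually_vol_stats_diff_le:
  assumes "0 \<le> c0" "0 \<le> A"
  shows "\<forall>\<^sub>F n in sequentially. \<forall>n'. n \<le> n' \<and> real n' \<le> real n + A * sqrt (real n * ln (real n)) \<longrightarrow>
    \<bar>vol_mean TYPE('a::euclidean_space) c0 n n' - vol_mean TYPE('a) c0 n n\<bar>
      \<le> real n powr (-1/2 + 7 * sqrt (2 * ln (real n)) / ln (real n)) \<and>
    \<bar>vol_var TYPE('a) c0 n n' - vol_var TYPE('a) c0 n n\<bar>
      \<le> real n powr (-1/2 + 7 * sqrt (2 * ln (real n)) / ln (real n)) \<and>
    (\<forall>t. \<bar>vol_cdf TYPE('a) c0 n n' t - vol_cdf TYPE('a) c0 n n t\<bar>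
      \<le> real n powr (-1/2 + 7 * sqrt (2 * ln (real n)) / ln (real n)))"
proof -
  let ?s = "\<lambda>n::nat. sqrt (2 * ln (real n))"
  have "filterlim ?s at_top sequentially" by real_asymp
  then have "\<forall>\<^sub>F n in sequentially. hull_coupling_error DIM('a) (unit_ball_vol (real DIM('a))) A (?s n)
      \<le> exp (- ((?s n)\<^sup>2 / 4) + 7 * ?s n)"
    by (rule eventually_compose_filterlim[OF eventually_hull_coupling_error_le])
  moreover have "\<forall>\<^sub>F n in sequentially. 4 \<le> ?s n" by real_asymp
  moreover have "\<forall>\<^sub>F n in sequentially. radius c0 n \<le> 2 * ln (real n)"
    unfolding radius_def by real_asymp
  ultimately show ?thesis
  proof eventually_elim
    case (elim n)
    have "0 < ln (real n)"
      using elim(2) real_sqrt_gt_0_iff[of "2 * ln (real n)"] by linarith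
    moreover from this have "0 < real n" by (cases "n = 0") auto
    ultimately have s2: "(?s n)\<^sup>2 = 2 * ln (real n)"
      and b: "real n powr (-1/2 + 7 * ?s n / ln (real n)) = exp (- ((?s n)\<^sup>2 / 4) + 7 * ?s n)"
      by (simp_all add: powr_def field_simps)
    have R: "radius c0 n \<le> (?s n)\<^sup>2" using elim(3) s2 by simp
    show ?case
    proof (intro allI impI)
      fix n' assume n': "n \<le> n' \<and> real n' \<le> real n + A * sqrt (real n * ln (real n))"
      note bound = vol_stats_diff_le_coupling_error[OF \<open>0 \<le> c0\<close> elim(2) R \<open>0 \<le> A\<close> conjunct1[OF n'] conjunct2[OF n'], where 'a='a]
      show "\<bar>vol_mean TYPE('a) c0 n n' - vol_mean TYPE('a) c0 n n\<bar> \<le> real n powr (-1/2 + 7 * ?s n / ln (real n)) \<and>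
        \<bar>vol_var TYPE('a) c0 n n' - vol_var TYPE('a) c0 n n\<bar> \<le> real n powr (-1/2 + 7 * ?s n / ln (real n)) \<and>
        (\<forall>t. \<bar>vol_cdf TYPE('a) c0 n n' t - vol_cdf TYPE('a) c0 n n t\<bar> \<le> real n powr (-1/2 + 7 * ?s n / ln (real n)))"
        unfolding b using order_trans[OF bound(1) elim(1)] order_trans[OF bound(2) elim(1)]
          order_trans[OF bound(3) elim(1)] by blast
    qed
  qed
qed

text \<open>The argument works in every dimension.\<close>
theorem lemma8p4:
  assumes "DIM('a::euclidean_space) \<ge> 2"
  shows "\<exists>C0::real. \<forall>c0\<ge>C0. \<forall>A::real\<ge>10. \<exists>\<delta>::nat \<Rightarrow> real. \<delta> \<longlonglongrightarrow> 0 \<and>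
    (\<forall>\<^sub>F n in sequentially. \<forall>n'::nat. n \<le> n' \<and> real n' \<le> real n + A * sqrt (real n * ln (real n)) \<longrightarrow>
       \<bar>vol_mean TYPE('a) c0 n n' - vol_mean TYPE('a) c0 n n\<bar> \<le> real n powr (-1/2 + \<delta> n) \<and>
       \<bar>vol_var TYPE('a) c0 n n' - vol_var TYPE('a) c0 n n\<bar> \<le> real n powr (-1/2 + \<delta> n) \<and>
       (\<forall>t. \<bar>vol_cdf TYPE('a) c0 n n' t - vol_cdf TYPE('a) c0 n n t\<bar> \<le> real n powr (-1/2 + \<delta> n)))"
proof -
  have "(\<lambda>n::nat. 7 * sqrt (2 * ln (real n)) / ln (real n)) \<longlonglongrightarrow> 0"
    by real_asymp
  then show ?thesis
    by (intro exI[of _ 0] allI impI exI[of _ "\<lambda>n::nat. 7 * sqrt (2 * ln (real n)) / ln (real n)"]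
        conjI eventually_vol_stats_diff_le) auto
qed

end
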